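(* Let $g\in\mathcal{G}$ be slow-jumping and slow-dropping. There exists a sub-polynomial function $h$ such that for every $\lambda>0$, every stream $D\in\mathcal{D}(n,m)$ with frequencies $v_1,\dots,v_n$, and every $i\in[n]$: if $g(|v_i|)\ge \lambda\sum_{j=1}^n g(|v_j|)$, then $v_i^2\ge \frac{\lambda}{h(|v_i|)}\sum_{j:|v_j|<|v_i|} v_j^2$.
   Context: Streams: a stream of length $m$ with domain $[n]$ is a list $\langle (i_1,\delta_1),\dots,(i_m,\delta_m)\rangle$ with $i_j\in[n]$, $\delta_j\in\mathbb{Z}$; its frequencies are $v_i=\sum_{j:i_j=i}\delta_j$. $\mathcal{D}(n,m)$ is the set of turnstile streams with domain $[n]$ and length at most $m$ (there is $M$ with all prefix frequency vectors in $\{-M,\dots,M\}^n$). $\mathcal{G}=\{g:\mathbb{Z}_{\ge0}\to\mathbb{R}: g(0)=0,\ g(1)=1,\ g(x)>0\ \forall x>0\}$. A function $f:\mathbb{R}_{\ge0}\to\mathbb{R}_{\ge0}$ is sub-polynomial if for every $\alpha>0$, $\lim_{x\to\infty}x^\alpha f(x)=\infty$ and $\lim_{x\to\infty}x^{-\alpha}f(x)=0$. $g$ is slow-jumping if for every $\alpha>0$ there is $N>0$ such that for all positive integers $x<y$ with $y\ge N$, $g(y)\le \lfloor y/x\rfloor^{2+\alpha}x^\alpha g(x)$. $g$ is slow-dropping if for every $\alpha>0$ there is $N>0$ such that for all $x<y$ with $y\ge N$, $g(y)\ge g(x)/y^\alpha$. *)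

theory Defs
  imports "HOL-Analysis.Analysis"
begin

text \<open>A stream is a list of updates (i, delta); domain [n] = {1..n}.\<close>
type_synonym stream = "(nat \<times> int) list"

definition freq :: "stream \<Rightarrow> nat \<Rightarrow> int" where
  "freq s i = sum_list (map snd (filter (\<lambda>p. fst p = i) s))"

text \<open>D(n,m): turnstile streams over [n] of length at most m. The bound M on
prefix frequency vectors always exists for a finite list, so it imposes no
further restriction.\<close>
definition streams :: "nat \<Rightarrow> nat \<Rightarrow> stream set" where
  "streams n m = {s. length s \<le> m \<and> (\<forall>p\<in>set s. fst p \<in> {1..n})}"

definition classG :: "(nat \<Rightarrow> real) \<Rightarrow> bool" where
  "classG g \<longleftrightarrow> g 0 = 0 \<and> g 1 = 1 \<and> (\<forall>x>0. g x > 0)"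

definition sub_polynomial :: "(real \<Rightarrow> real) \<Rightarrow> bool" where
  "sub_polynomial f \<longleftrightarrow> (\<forall>x\<ge>0. f x \<ge> 0) \<and>
     (\<forall>\<alpha>>0. filterlim (\<lambda>x. x powr \<alpha> * f x) at_top at_top \<and>
             ((\<lambda>x. x powr (-\<alpha>) * f x) \<longlongrightarrow> 0) at_top)"

definition slow_jumping :: "(nat \<Rightarrow> real) \<Rightarrow> bool" where
  "slow_jumping g \<longleftrightarrow> (\<forall>\<alpha>>0. \<exists>N>0. \<forall>x y::nat. 0 < x \<and> x < y \<and> y \<ge> N \<longrightarrow>
      g y \<le> real (y div x) powr (2 + \<alpha>) * real x powr \<alpha> * g x)"

definition slow_dropping :: "(nat \<Rightarrow> real) \<Rightarrow> bool" where
  "slow_dropping g \<longleftrightarrow> (\<forall>\<alpha>>0. \<exists>N>0. \<forall>x y::nat. x < y \<and> y \<ge> N \<longrightarrow>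
      g y \<ge> g x / real y powr \<alpha>)"

end

theory Submission
  imports Defs "HOL-Real_Asymp.Real_Asymp"
begin

text \<open>For frequencies x < y the weight g x controls x^2 up to the factor
x^2 g y / (y^2 g x). Taking h(y) to be the worst such factor below y makes the
inequality immediate, since the coordinates lighter than the heavy hitter carry total weight at
most g y / \<lambda>. Slow jumping says exactly that this worst factor grows slower than every
power of y, so h is sub-polynomial.\<close>

definition jump_factor :: "(nat \<Rightarrow> real) \<Rightarrow> nat \<Rightarrow> real" where
  "jump_factor g y = Max (insert 1 ((\<lambda>x. real x ^ 2 * g y / (real y ^ 2 * g x)) ` {1..<y}))"

lemma jump_factor_ge_1: "jump_factor g y \<ge> 1"
  unfolding jump_factor_def by (rule Max_ge) auto

lemma jump_factor_ge:
  "0 < x \<Longrightarrow> x < y \<Longrightarrow> real x ^ 2 * g y / (real y ^ 2 * g x) \<le> jump_factor g y"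
  unfolding jump_factor_def by (rule Max_ge) auto

lemma classG_nonneg: "classG g \<Longrightarrow> g x \<ge> 0"
  unfolding classG_def by (cases "x = 0") (auto intro: less_imp_le)

lemma classG_pos: "classG g \<Longrightarrow> x > 0 \<Longrightarrow> g x > 0"
  unfolding classG_def by auto

lemma jump_ratio_le_powr:
  fixes g :: "nat \<Rightarrow> real"
  assumes g: "classG g" and b: "b > 0" and x: "0 < x" "x < y"
    and jump: "g y \<le> real (y div x) powr (2 + b) * real x powr b * g x"
  shows "real x ^ 2 * g y / (real y ^ 2 * g x) \<le> real y powr b"
proof -
  have gx: "g x > 0" using classG_pos[OF g x(1)] .
  have xy: "real x > 0" "real y > 0" using x by auto
  have "real (y div x) powr (2 + b) \<le> (real y / real x) powr (2 + b)"
    using b by (intro powr_mono2) (auto simp: of_nat_div_le_of_nat)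
  also have "\<dots> = (real y / real x) ^ 2 * (real y powr b / real x powr b)"
    using xy by (simp add: powr_add powr_divide powr_numeral power_divide)
  finally have "g y \<le> (real y / real x) ^ 2 * (real y powr b / real x powr b) * real x powr b * g x"
    using jump gx by (meson mult_right_mono order_trans less_imp_le powr_ge_zero)
  also have "\<dots> = real y powr b * (real y ^ 2 * g x) / real x ^ 2"
    using xy by (simp add: field_simps power2_eq_square)
  finally show ?thesis
    using xy gx by (simp add: field_simps)
qed

lemma slow_jumping_jump_factor_le_powr:
  fixes g :: "nat \<Rightarrow> real"
  assumes g: "classG g" and sj: "slow_jumping g" and b: "b > 0"
  shows "\<exists>N>0. \<forall>y\<ge>N. jump_factor g y \<le> real y powr b"
proof -
  obtain N where N: "N > 0" "\<forall>x y::nat. 0 < x \<and> x < y \<and> y \<ge> N \<longrightarrow>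
      g y \<le> real (y div x) powr (2 + b) * real x powr b * g x"
    using sj b unfolding slow_jumping_def by blast
  have "jump_factor g y \<le> real y powr b" if y: "y \<ge> N" for y
    unfolding jump_factor_def
  proof (rule Max.boundedI)
    fix r assume "r \<in> insert 1 ((\<lambda>x. real x ^ 2 * g y / (real y ^ 2 * g x)) ` {1..<y})"
    then show "r \<le> real y powr b"
    proof
      assume "r = 1"
      then show ?thesis using y N b by (simp add: ge_one_powr_ge_zero)
    next
      assume "r \<in> (\<lambda>x. real x ^ 2 * g y / (real y ^ 2 * g x)) ` {1..<y}"
      then show ?thesis using jump_ratio_le_powr[OF g b] N(2) y by force
    qed
  qed auto
  with N(1) show ?thesis by blast
qed

lemma sub_polynomialI:
  fixes h :: "real \<Rightarrow> real"
  assumes ge_1: "\<And>x. h x \<ge> 1"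
    and small: "\<And>b. b > 0 \<Longrightarrow> eventually (\<lambda>x. h x \<le> x powr b) at_top"
  shows "sub_polynomial h"
  unfolding sub_polynomial_def
proof (intro conjI allI impI)
  show "0 \<le> h x" for x using ge_1[of x] by simp
next
  fix a :: real assume a: "a > 0"
  have "eventually (\<lambda>x. x powr a \<le> x powr a * h x) at_top"
    using mult_left_mono[OF ge_1 powr_ge_zero] by (intro always_eventually allI) simp
  moreover have "filterlim (\<lambda>x::real. x powr a) at_top at_top" using a by real_asymp
  ultimately show "filterlim (\<lambda>x. x powr a * h x) at_top at_top"
    by (rule filterlim_at_top_mono[rotated])
next
  fix a :: real assume a: "a > 0"
  have "eventually (\<lambda>x. h x \<le> x powr (a/2)) at_top" using a by (intro small) simp
  then have upper: "eventually (\<lambda>x. x powr (-a) * h x \<le> x powr (-a/2)) at_top"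
    using eventually_gt_at_top[of 0]
  proof eventually_elim
    case (elim x)
    then have "x powr (-a) * h x \<le> x powr (-a) * x powr (a/2)"
      by (intro mult_left_mono) auto
    also have "\<dots> = x powr (-a/2)" by (simp add: powr_add[symmetric])
    finally show ?case .
  qed
  have lower: "eventually (\<lambda>x. 0 \<le> x powr (-a) * h x) at_top"
    using ge_1 by (intro always_eventually allI) (simp add: order_trans[OF zero_le_one])
  have "((\<lambda>x::real. x powr (-a/2)) \<longlongrightarrow> 0) at_top" using a by real_asymp
  then show "((\<lambda>x. x powr (-a) * h x) \<longlongrightarrow> 0) at_top"
    by (rule tendsto_sandwich[OF lower upper tendsto_const])
qed

lemma sub_polynomial_jump_factor:
  assumes "classG g" and "slow_jumping g"
  shows "sub_polynomial (\<lambda>x. jump_factor g (nat \<lfloor>x\<rfloor>))"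
proof (rule sub_polynomialI[OF jump_factor_ge_1])
  fix b :: real assume b: "b > 0"
  obtain N where N: "N > 0" "\<forall>y\<ge>N. jump_factor g y \<le> real y powr b"
    using slow_jumping_jump_factor_le_powr[OF assms b] by blast
  show "eventually (\<lambda>x. jump_factor g (nat \<lfloor>x\<rfloor>) \<le> x powr b) at_top"
    using eventually_ge_at_top[of "real N"]
  proof eventually_elim
    case (elim x)
    then have "jump_factor g (nat \<lfloor>x\<rfloor>) \<le> real (nat \<lfloor>x\<rfloor>) powr b"
      using N(2) le_nat_floor by blast
    also have "\<dots> \<le> x powr b"
      using elim N(1) b by (intro powr_mono2) auto
    finally show ?case .
  qed
qed

lemma square_le_jump_factor:
  assumes g: "classG g" and "x < y"
  shows "real x ^ 2 \<le> jump_factor g y * real y ^ 2 / g y * g x"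
proof (cases "x = 0")
  case True
  then show ?thesis using g by (simp add: classG_def)
next
  case False
  have gx: "g x > 0" and gy: "g y > 0"
    using classG_pos[OF g] False \<open>x < y\<close> by auto
  have "real x ^ 2 * g y / (real y ^ 2 * g x) \<le> jump_factor g y"
    using jump_factor_ge False \<open>x < y\<close> by blast
  then show ?thesis
    using gx gy \<open>x < y\<close> by (simp add: field_simps)
qed

lemma heavy_hitter_square_bound:
  fixes v :: "nat \<Rightarrow> int" and I :: "nat set"
  assumes g: "classG g" and I: "finite I" and lam: "lam > 0"
    and heavy: "g (nat \<bar>v i\<bar>) \<ge> lam * (\<Sum>j\<in>I. g (nat \<bar>v j\<bar>))"
  defines "L \<equiv> {j\<in>I. \<bar>v j\<bar> < \<bar>v i\<bar>}"
  shows "real_of_int ((v i)\<^sup>2) \<ge>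
    lam / jump_factor g (nat \<bar>v i\<bar>) * (\<Sum>j\<in>L. real_of_int ((v j)\<^sup>2))"
proof (cases "v i = 0")
  case True
  then have "L = {}" unfolding L_def by auto
  then show ?thesis by simp
next
  case False
  define y where "y = nat \<bar>v i\<bar>"
  define c where "c = jump_factor g y * real y ^ 2 / g y"
  have gy: "g y > 0" using classG_pos[OF g] False y_def by simp
  have c: "c \<ge> 0" using jump_factor_ge_1[of g y] gy by (simp add: c_def)
  have sub: "(\<Sum>j\<in>L. g (nat \<bar>v j\<bar>)) \<le> (\<Sum>j\<in>I. g (nat \<bar>v j\<bar>))"
    using I by (intro sum_mono2) (auto simp: L_def classG_nonneg[OF g])
  have light: "(\<Sum>j\<in>L. g (nat \<bar>v j\<bar>)) \<le> g y / lam"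
  proof -
    have "lam * (\<Sum>j\<in>L. g (nat \<bar>v j\<bar>)) \<le> g y"
      using mult_left_mono[OF sub, of lam] heavy lam unfolding y_def by linarith
    then show ?thesis using lam by (simp add: pos_le_divide_eq mult.commute)
  qed
  have "(\<Sum>j\<in>L. real_of_int ((v j)\<^sup>2)) \<le> (\<Sum>j\<in>L. c * g (nat \<bar>v j\<bar>))"
  proof (rule sum_mono)
    fix j assume "j \<in> L"
    then have "nat \<bar>v j\<bar> < y" by (auto simp: L_def y_def)
    from square_le_jump_factor[OF g this] show "real_of_int ((v j)\<^sup>2) \<le> c * g (nat \<bar>v j\<bar>)"
      by (simp add: c_def)
  qed
  also have "\<dots> \<le> c * (g y / lam)"
    using mult_left_mono[OF light c] by (simp add: sum_distrib_left)
  also have "\<dots> = jump_factor g y * real y ^ 2 / lam"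
    using gy by (simp add: c_def)
  finally have "lam / jump_factor g y * (\<Sum>j\<in>L. real_of_int ((v j)\<^sup>2)) \<le> real y ^ 2"
    using lam jump_factor_ge_1[of g y] by (simp add: field_simps)
  moreover have "real y ^ 2 = real_of_int ((v i)\<^sup>2)" by (simp add: y_def)
  ultimately show ?thesis unfolding y_def[symmetric] by simp
qed

theorem lemma17:
  fixes g :: "nat \<Rightarrow> real"
  assumes "classG g" and "slow_jumping g" and "slow_dropping g"
  shows "\<exists>h. sub_polynomial h \<and> (\<forall>x>0. h x > 0) \<and>
    (\<forall>n m (lam::real) s i. lam > 0 \<longrightarrow> s \<in> streams n m \<longrightarrow> i \<in> {1..n} \<longrightarrow>
       g (nat \<bar>freq s i\<bar>) \<ge> lam * (\<Sum>j=1..n. g (nat \<bar>freq s j\<bar>)) \<longrightarrow>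
       real_of_int ((freq s i)\<^sup>2) \<ge>
         lam / h (real_of_int \<bar>freq s i\<bar>) *
           (\<Sum>j\<in>{j\<in>{1..n}. \<bar>freq s j\<bar> < \<bar>freq s i\<bar>}. real_of_int ((freq s j)\<^sup>2)))"
proof (intro exI conjI allI impI)
  let ?h = "\<lambda>x. jump_factor g (nat \<lfloor>x\<rfloor>)"
  show "sub_polynomial ?h" using sub_polynomial_jump_factor[OF assms(1,2)] .
  show "?h x > 0" for x using jump_factor_ge_1 less_le_trans zero_less_one by blast
  fix n m lam s i
  assume "lam > 0" "g (nat \<bar>freq s i\<bar>) \<ge> lam * (\<Sum>j=1..n. g (nat \<bar>freq s j\<bar>))"
  from heavy_hitter_square_bound[OF assms(1) finite_atLeastAtMost this]
  show "real_of_int ((freq s i)\<^sup>2) \<ge> lam / ?h (real_of_int \<bar>freq s i\<bar>) *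
      (\<Sum>j\<in>{j\<in>{1..n}. \<bar>freq s j\<bar> < \<bar>freq s i\<bar>}. real_of_int ((freq s j)\<^sup>2))"
    by (simp only: of_int_abs[symmetric] floor_of_int)
qed

end
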